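(* Under the hypotheses of the preceding statement ($\mu$-weakly convex $f$ with $\alpha$-sharp minimum on closed convex $Q$, initial point with $\min_{x_*\in X_*}\|x^0-x_*\|_2\le\alpha\gamma/\mu$ for some $\gamma\in(0,1)$, projected subgradient method with Polyak step $h_k=(f(x^k)-f^* )/\|\nabla f(x^k)\|_2^2$, iterates $x^0,\dots,x^k\notin X_*$), assume in addition that $f$ is $M$-Lipschitz. Then $$\min_{x_*\in X_*}\|x^{k+1}-x_*\|_2^2\le\Bigl(1-\frac{\alpha^2(1-\gamma)}{M^2}\Bigr)^{k+1}\min_{x_*\in X_*}\|x^0-x_*\|_2^2.$$
   Context: $f$ is $\mu$-weakly convex if $x\mapsto f(x)+\frac{\mu}{2}\|x\|_2^2$ is convex; subgradients are taken in the sense $f(y)\ge f(x)+\langle v,y-x\rangle+o(\|y-x\|_2)$. $X_*$ is the set of minimizers of $f$ on $Q$, $f^*=\min_Q f$, $\operatorname{Pr}_Q$ the Euclidean projection. *)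

theory Defs
  imports "HOL-Analysis.Analysis"
begin

definition weakly_convex :: "real \<Rightarrow> ('a::euclidean_space \<Rightarrow> real) \<Rightarrow> bool" where
  "weakly_convex mu f \<longleftrightarrow> convex_on UNIV (\<lambda>x. f x + mu / 2 * (norm x)\<^sup>2)"

text \<open>Frechet (regular) subgradient: f y \<ge> f x + <v, y - x> + o(|y - x|).\<close>
definition subgrad :: "('a::euclidean_space \<Rightarrow> real) \<Rightarrow> 'a \<Rightarrow> 'a \<Rightarrow> bool" where
  "subgrad f x v \<longleftrightarrow>
     (\<forall>e>0. \<exists>d>0. \<forall>y. norm (y - x) < d \<longrightarrow> f y \<ge> f x + inner v (y - x) - e * norm (y - x))"

definition fstar :: "('a \<Rightarrow> real) \<Rightarrow> 'a set \<Rightarrow> real" where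
  "fstar f Q = Inf (f ` Q)"

definition argmin_set :: "('a \<Rightarrow> real) \<Rightarrow> 'a set \<Rightarrow> 'a set" where
  "argmin_set f Q = {x \<in> Q. \<forall>y\<in>Q. f x \<le> f y}"

definition sharp_min :: "real \<Rightarrow> ('a::euclidean_space \<Rightarrow> real) \<Rightarrow> 'a set \<Rightarrow> bool" where
  "sharp_min alpha f Q \<longleftrightarrow> argmin_set f Q \<noteq> {} \<and>
     (\<forall>x\<in>Q. f x - fstar f Q \<ge> alpha * infdist x (argmin_set f Q))"

end

theory Submission
  imports Defs
begin

text \<open>Let \<open>z\<close> be the minimizer nearest to an iterate \<open>x\<close> and \<open>D = f x - f\<^sup>*\<close>. Weak convexity gives
  \<open>\<langle>g, x - z\<rangle> \<ge> D - \<mu>/2 \<parallel>x - z\<parallel>\<^sup>2\<close>, and sharpness \<open>D \<ge> \<alpha> \<parallel>x - z\<parallel>\<close> together with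
  \<open>\<parallel>x - z\<parallel> \<le> \<alpha>\<gamma>/\<mu>\<close> turns this into \<open>\<langle>g, x - z\<rangle> \<ge> (1 - \<gamma>/2) D\<close>. Expanding the Polyak step
  and using that the projection onto \<open>Q\<close> is nonexpansive yields
  \<open>\<parallel>x\<^sup>+ - z\<parallel>\<^sup>2 \<le> \<parallel>x - z\<parallel>\<^sup>2 - (1 - \<gamma>) D\<^sup>2/\<parallel>g\<parallel>\<^sup>2 \<le> (1 - \<alpha>\<^sup>2(1 - \<gamma>)/M\<^sup>2) \<parallel>x - z\<parallel>\<^sup>2\<close>, as \<open>\<parallel>g\<parallel> \<le> M\<close>.
  So the distance to the minimizers decreases, the closeness hypothesis persists, and the
  contraction can be iterated.\<close>

lemma weakly_convex_chord:
  fixes f :: "'a::euclidean_space \<Rightarrow> real"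
  assumes "weakly_convex mu f" and "0 \<le> t" and "t \<le> 1"
  shows "f ((1 - t) *\<^sub>R x + t *\<^sub>R y)
           \<le> (1 - t) * f x + t * f y + mu / 2 * (t * (1 - t)) * (norm (y - x))\<^sup>2"
proof -
  \<comment> \<open>\<open>mu / 2\<close> is kept as an atom \<open>m\<close>, otherwise \<open>algebra_simps\<close> distributes the division\<close>
  define m where "m = mu / 2"
  have sq: "(norm ((1 - t) *\<^sub>R x + t *\<^sub>R y))\<^sup>2
              = (1 - t) * (norm x)\<^sup>2 + t * (norm y)\<^sup>2 - t * (1 - t) * (norm (y - x))\<^sup>2"
    unfolding power2_norm_eq_inner
    by (simp add: inner_add_left inner_add_right inner_diff_left inner_diff_right
        inner_commute algebra_simps power2_eq_square)
  have "f ((1 - t) *\<^sub>R x + t *\<^sub>R y) + m * (norm ((1 - t) *\<^sub>R x + t *\<^sub>R y))\<^sup>2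
          \<le> (1 - t) * (f x + m * (norm x)\<^sup>2) + t * (f y + m * (norm y)\<^sup>2)"
    using assms convex_onD[of UNIV "\<lambda>x. f x + m * (norm x)\<^sup>2" t x y]
    by (simp add: weakly_convex_def m_def)
  then show ?thesis
    unfolding sq m_def[symmetric] by (simp add: algebra_simps)
qed

lemma weakly_convex_subgrad_ineq:
  fixes f :: "'a::euclidean_space \<Rightarrow> real"
  assumes wc: "weakly_convex mu f" and mu: "mu \<ge> 0" and sg: "subgrad f x g"
  shows "f y \<ge> f x + inner g (y - x) - mu / 2 * (norm (y - x))\<^sup>2"
proof (cases "y = x")
  case True
  then show ?thesis by simp
next
  case False
  define w where "w = y - x"
  define m where "m = mu / 2"
  define S where "S = f y - f x - inner g w + m * (norm w)\<^sup>2"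
  have w: "norm w > 0"
    using False by (simp add: w_def)
  \<comment> \<open>compare the subgradient inequality at \<open>x + t w\<close>, \<open>t\<close> small, with the chord inequality\<close>
  have approx: "0 \<le> S + e * norm w" if e: "e > 0" for e
  proof -
    obtain d where d: "d > 0"
      and near: "\<And>z. norm (z - x) < d \<Longrightarrow> f z \<ge> f x + inner g (z - x) - e * norm (z - x)"
      using sg e unfolding subgrad_def by blast
    define t where "t = min 1 (d / (2 * norm w))"
    have t: "0 < t" "t \<le> 1"
      using d w by (auto simp: t_def)
    have "t * norm w \<le> d / (2 * norm w) * norm w"
      unfolding t_def by (intro mult_right_mono) auto
    then have "t * norm w \<le> d / 2"
      using w by simp
    then have "f x + t * inner g w - e * (t * norm w) \<le> f (x + t *\<^sub>R w)"
      using near[of "x + t *\<^sub>R w"] d t by simp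
    also have "x + t *\<^sub>R w = (1 - t) *\<^sub>R x + t *\<^sub>R y"
      by (simp add: w_def algebra_simps)
    also have "f \<dots> \<le> (1 - t) * f x + t * f y + m * (t * (1 - t)) * (norm w)\<^sup>2"
      using weakly_convex_chord[OF wc] t by (simp add: w_def m_def)
    finally have "0 \<le> t * (S + e * norm w - m * t * (norm w)\<^sup>2)"
      unfolding S_def by (simp add: algebra_simps)
    then have "0 \<le> S + e * norm w - m * t * (norm w)\<^sup>2"
      using t by (simp add: zero_le_mult_iff)
    moreover have "0 \<le> m * t * (norm w)\<^sup>2"
      using t mu by (simp add: m_def)
    ultimately show ?thesis
      by linarith
  qed
  have "0 \<le> S + e" if "e > 0" for e
    using approx[of "e / norm w"] that w by simp
  then have "0 \<le> S"
    by (rule field_le_epsilon)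
  then show ?thesis
    by (simp add: S_def w_def m_def)
qed

lemma subgrad_norm_le_lipschitz:
  fixes f :: "'a::euclidean_space \<Rightarrow> real"
  assumes lip: "M-lipschitz_on UNIV f" and sg: "subgrad f x g"
  shows "norm g \<le> M"
proof (rule field_le_epsilon)
  fix e :: real
  assume e: "0 < e"
  show "norm g \<le> M + e"
  proof (cases "g = 0")
    case True
    then show ?thesis
      using lipschitz_on_nonneg[OF lip] e by simp
  next
    case False
    obtain d where d: "d > 0"
      and near: "\<And>z. norm (z - x) < d \<Longrightarrow> f z \<ge> f x + inner g (z - x) - e * norm (z - x)"
      using sg e unfolding subgrad_def by blast
    define u where "u = (d / 2 / norm g) *\<^sub>R g"
    have u: "norm u = d / 2" "inner g u = d / 2 * norm g"
      using False d by (simp_all add: u_def dot_square_norm power2_eq_square)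
    have "f x + d / 2 * norm g - e * (d / 2) \<le> f (x + u)"
      using near[of "x + u"] u d by simp
    also have "f (x + u) \<le> f x + M * (d / 2)"
    proof -
      have "\<bar>f (x + u) - f x\<bar> \<le> M * (d / 2)"
        using lipschitz_onD[OF lip, of "x + u" x] u by (simp add: dist_norm dist_real_def)
      then show ?thesis
        by arith
    qed
    finally have "d / 2 * norm g \<le> d / 2 * (M + e)"
      by (simp add: algebra_simps)
    then show ?thesis
      using d by simp
  qed
qed

lemma closed_argmin_set:
  fixes f :: "'a::topological_space \<Rightarrow> real"
  assumes "closed Q" and "continuous_on UNIV f"
  shows "closed (argmin_set f Q)"
proof -
  have "argmin_set f Q = Q \<inter> (\<Inter>y\<in>Q. {x. f x \<le> f y})"
    by (auto simp: argmin_set_def)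
  moreover have "closed {x. f x \<le> f y}" for y
    using assms(2) by (intro closed_Collect_le) (auto intro: continuous_on_const)
  ultimately show ?thesis
    using assms(1) by (simp add: closed_INT closed_Int)
qed

lemma fstar_eq_argmin:
  assumes "z \<in> argmin_set f Q"
  shows "fstar f Q = f z"
  unfolding fstar_def using assms
  by (intro cInf_eq_minimum) (auto simp: argmin_set_def)

lemma nearest_minimizer:
  fixes f :: "'a::euclidean_space \<Rightarrow> real"
  assumes "closed Q" and "continuous_on UNIV f" and "argmin_set f Q \<noteq> {}"
  obtains z where "z \<in> argmin_set f Q" and "infdist x (argmin_set f Q) = norm (x - z)"
  using infdist_attains_inf[OF closed_argmin_set[OF assms(1,2)] assms(3), of x]
  by (auto simp: dist_norm)

lemma sharp_min_le_lipschitz: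
  fixes f :: "'a::euclidean_space \<Rightarrow> real"
  assumes sharp: "sharp_min alpha f Q" and lip: "M-lipschitz_on UNIV f" and "closed Q"
    and x: "x \<in> Q" "x \<notin> argmin_set f Q"
  shows "alpha \<le> M"
proof -
  obtain z where z: "z \<in> argmin_set f Q" and dz: "infdist x (argmin_set f Q) = norm (x - z)"
    using nearest_minimizer[OF \<open>closed Q\<close> lipschitz_on_continuous_on[OF lip]] sharp
    unfolding sharp_min_def by metis
  have "alpha * norm (x - z) \<le> f x - f z"
    using sharp x dz fstar_eq_argmin[OF z] unfolding sharp_min_def by metis
  also have "\<dots> \<le> M * norm (x - z)"
    using lipschitz_onD[OF lip, of x z] by (simp add: dist_norm)
  finally show ?thesis
    using x z by (auto simp: mult_le_cancel_right)
qed

lemma projected_polyak_step: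
  fixes x z g :: "'a::euclidean_space"
  assumes "closed Q" and "convex Q" and "z \<in> Q" and "g \<noteq> 0"
  shows "(norm (closest_point Q (x - (D / (norm g)\<^sup>2) *\<^sub>R g) - z))\<^sup>2
           \<le> (norm (x - z))\<^sup>2 - D * (2 * inner g (x - z) - D) / (norm g)\<^sup>2"
proof -
  define y where "y = x - (D / (norm g)\<^sup>2) *\<^sub>R g"
  have "norm (closest_point Q y - z) \<le> norm (y - z)"
    using closest_point_lipschitz[OF assms(2,1), of y z] closest_point_self[OF assms(3)] assms(3)
    by (auto simp: dist_norm)
  then have "(norm (closest_point Q y - z))\<^sup>2 \<le> (norm (y - z))\<^sup>2"
    by (simp add: power_mono)
  also have "(norm (y - z))\<^sup>2 = (norm (x - z))\<^sup>2 - 2 * (D / (norm g)\<^sup>2) * inner g (x - z)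
                                   + (D / (norm g)\<^sup>2)\<^sup>2 * (norm g)\<^sup>2"
  proof -
    have "(norm (v - c *\<^sub>R g))\<^sup>2 = (norm v)\<^sup>2 - 2 * c * inner g v + c\<^sup>2 * (norm g)\<^sup>2" for v c
      unfolding power2_norm_eq_inner
      by (simp add: inner_diff_left inner_diff_right inner_commute algebra_simps power2_eq_square)
    moreover have "y - z = (x - z) - (D / (norm g)\<^sup>2) *\<^sub>R g"
      by (simp add: y_def)
    ultimately show ?thesis
      by presburger
  qed
  also have "\<dots> = (norm (x - z))\<^sup>2 - D * (2 * inner g (x - z) - D) / (norm g)\<^sup>2"
  proof -
    have "n \<noteq> 0 \<Longrightarrow> a - 2 * (D / n) * b + (D / n)\<^sup>2 * n = a - D * (2 * b - D) / n" for a b n :: real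
      by (simp add: power2_eq_square field_simps)
    then show ?thesis
      using assms(4) by simp
  qed
  finally show ?thesis
    by (simp add: y_def)
qed

lemma polyak_step_contraction:
  fixes f :: "'a::euclidean_space \<Rightarrow> real"
  assumes "closed Q" and "convex Q"
    and mu: "mu > 0" and wc: "weakly_convex mu f"
    and alpha: "alpha > 0" and sharp: "sharp_min alpha f Q"
    and lip: "M-lipschitz_on UNIV f" and gamma: "0 \<le> gamma" "gamma < 1"
    and x: "x \<in> Q" "x \<notin> argmin_set f Q"
    and close: "infdist x (argmin_set f Q) \<le> alpha * gamma / mu"
    and sg: "subgrad f x g"
  shows "(infdist (closest_point Q (x - ((f x - fstar f Q) / (norm g)\<^sup>2) *\<^sub>R g)) (argmin_set f Q))\<^sup>2
           \<le> (1 - alpha\<^sup>2 * (1 - gamma) / M\<^sup>2) * (infdist x (argmin_set f Q))\<^sup>2"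
proof -
  obtain z where z: "z \<in> argmin_set f Q" and dz: "infdist x (argmin_set f Q) = norm (x - z)"
    using nearest_minimizer[OF \<open>closed Q\<close> lipschitz_on_continuous_on[OF lip]] sharp
    unfolding sharp_min_def by metis
  define d where "d = norm (x - z)"
  define D where "D = f x - fstar f Q"
  have d: "d > 0"
    using x z by (auto simp: d_def)
  have gap: "alpha * d \<le> D"
    using sharp x dz unfolding sharp_min_def D_def d_def by metis
  have D: "D > 0"
    using gap mult_pos_pos[OF alpha d] by linarith
  have "mu * d\<^sup>2 \<le> alpha * gamma * d"
    using close dz mu d by (simp add: d_def power2_eq_square field_simps mult_right_mono)
  also have "\<dots> \<le> gamma * D"
    using mult_left_mono[OF gap gamma(1)] by (simp add: algebra_simps)
  finally have curv: "mu * d\<^sup>2 \<le> gamma * D" .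
  have "D - mu / 2 * d\<^sup>2 \<le> inner g (x - z)"
    using weakly_convex_subgrad_ineq[OF wc _ sg, of z] mu fstar_eq_argmin[OF z]
    by (simp add: D_def d_def norm_minus_commute inner_diff_right)
  with curv have descent: "(1 - gamma / 2) * D \<le> inner g (x - z)"
    by (simp add: algebra_simps)
  have "0 < (1 - gamma / 2) * D"
    using D gamma by simp
  with descent have "g \<noteq> 0"
    by auto
  then have g: "0 < norm g" "norm g \<le> M"
    using subgrad_norm_le_lipschitz[OF lip sg] by auto
  have zQ: "z \<in> Q"
    using z by (simp add: argmin_set_def)
  have "(infdist (closest_point Q (x - (D / (norm g)\<^sup>2) *\<^sub>R g)) (argmin_set f Q))\<^sup>2
          \<le> (norm (closest_point Q (x - (D / (norm g)\<^sup>2) *\<^sub>R g) - z))\<^sup>2"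
    using infdist_le[OF z] by (simp add: dist_norm power_mono infdist_nonneg)
  also have "\<dots> \<le> d\<^sup>2 - D * (2 * inner g (x - z) - D) / (norm g)\<^sup>2"
    using projected_polyak_step[OF \<open>closed Q\<close> \<open>convex Q\<close> zQ \<open>g \<noteq> 0\<close>] by (simp add: d_def)
  also have "\<dots> \<le> d\<^sup>2 - (1 - gamma) * D\<^sup>2 / (norm g)\<^sup>2"
  proof -
    have "D * ((1 - gamma / 2) * D) \<le> D * inner g (x - z)"
      using mult_left_mono[OF descent] D by simp
    then have "(1 - gamma) * D\<^sup>2 \<le> D * (2 * inner g (x - z) - D)"
      by (simp add: power2_eq_square algebra_simps)
    then show ?thesis
      by (simp add: divide_right_mono)
  qed
  also have "\<dots> \<le> d\<^sup>2 - (1 - gamma) * (alpha * d)\<^sup>2 / M\<^sup>2"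
  proof -
    have "(alpha * d)\<^sup>2 / M\<^sup>2 \<le> D\<^sup>2 / (norm g)\<^sup>2"
      using gap alpha d g by (intro frac_le power_mono) auto
    then have "(1 - gamma) * ((alpha * d)\<^sup>2 / M\<^sup>2) \<le> (1 - gamma) * (D\<^sup>2 / (norm g)\<^sup>2)"
      using gamma by (intro mult_left_mono) auto
    then show ?thesis
      by simp
  qed
  also have "\<dots> = (1 - alpha\<^sup>2 * (1 - gamma) / M\<^sup>2) * d\<^sup>2"
    by (simp add: power_mult_distrib field_simps)
  finally show ?thesis
    by (simp add: D_def d_def dz)
qed

lemma contraction_factor_bounds:
  fixes alpha gamma M :: real
  assumes "0 < alpha" and "alpha \<le> M" and "0 < gamma" and "gamma < 1"
  shows "0 \<le> 1 - alpha\<^sup>2 * (1 - gamma) / M\<^sup>2" and "1 - alpha\<^sup>2 * (1 - gamma) / M\<^sup>2 \<le> 1"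
proof -
  have "alpha\<^sup>2 * (1 - gamma) \<le> M\<^sup>2 * 1"
    using assms by (intro mult_mono power_mono) auto
  then show "0 \<le> 1 - alpha\<^sup>2 * (1 - gamma) / M\<^sup>2"
    using assms by (simp add: field_simps)
  show "1 - alpha\<^sup>2 * (1 - gamma) / M\<^sup>2 \<le> 1"
    using assms by simp
qed

theorem corollary2:
  fixes f :: "'a::euclidean_space \<Rightarrow> real"
    and Q :: "'a set"
    and mu alpha gamma M :: real
    and x g :: "nat \<Rightarrow> 'a"
    and k :: nat
  assumes "closed Q" and "convex Q" and "Q \<noteq> {}"
    and "mu > 0" and "alpha > 0"
    and "weakly_convex mu f"
    and "sharp_min alpha f Q"
    and "M-lipschitz_on UNIV f"
    and "0 < gamma" and "gamma < 1"
    and "x 0 \<in> Q"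
    and "infdist (x 0) (argmin_set f Q) \<le> alpha * gamma / mu"
    and "\<And>i. i \<le> k \<Longrightarrow> subgrad f (x i) (g i)"
    and "\<And>i. i \<le> k \<Longrightarrow> x (Suc i) = closest_point Q
            (x i - ((f (x i) - fstar f Q) / (norm (g i))\<^sup>2) *\<^sub>R g i)"
    and "\<And>i. i \<le> k \<Longrightarrow> x i \<notin> argmin_set f Q"
  shows "(infdist (x (Suc k)) (argmin_set f Q))\<^sup>2
           \<le> (1 - alpha\<^sup>2 * (1 - gamma) / M\<^sup>2) ^ (Suc k) * (infdist (x 0) (argmin_set f Q))\<^sup>2"
proof -
  define X where "X = argmin_set f Q"
  define c where "c = 1 - alpha\<^sup>2 * (1 - gamma) / M\<^sup>2"
  define d0 where "d0 = infdist (x 0) X"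
  have "alpha \<le> M"
    using sharp_min_le_lipschitz[OF assms(7,8,1,11) assms(15)[of 0]] by simp
  then have c: "0 \<le> c" "c \<le> 1"
    using contraction_factor_bounds[OF assms(5) _ assms(9,10)] by (auto simp: c_def)
  have "x i \<in> Q \<and> (infdist (x i) X)\<^sup>2 \<le> c ^ i * d0\<^sup>2" if "i \<le> Suc k" for i
    using that
  proof (induction i)
    case 0
    then show ?case
      using assms(11) by (simp add: d0_def)
  next
    case (Suc i)
    then have i: "i \<le> k" and xQ: "x i \<in> Q" and IH: "(infdist (x i) X)\<^sup>2 \<le> c ^ i * d0\<^sup>2"
      by auto
    have "(infdist (x i) X)\<^sup>2 \<le> d0\<^sup>2"
      using IH c mult_left_le_one_le[of "d0\<^sup>2" "c ^ i"] by (simp add: power_le_one)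
    then have "infdist (x i) X \<le> alpha * gamma / mu"
      using assms(12) power2_le_imp_le[of "infdist (x i) X" d0] by (simp add: d0_def X_def infdist_nonneg)
    then have "(infdist (x (Suc i)) X)\<^sup>2 \<le> c * (infdist (x i) X)\<^sup>2"
      using polyak_step_contraction[OF assms(1,2,4,6,5,7,8) less_imp_le[OF assms(9)] assms(10)
          xQ assms(15)[OF i] _ assms(13)[OF i]] assms(14)[OF i]
      by (simp add: X_def c_def)
    also have "\<dots> \<le> c * (c ^ i * d0\<^sup>2)"
      using IH c by (simp add: mult_left_mono)
    finally show ?case
      using assms(14)[OF i] closest_point_in_set[OF assms(1,3)] by (simp add: mult.assoc)
  qed
  from this[of "Suc k"] show ?thesis
    by (simp add: X_def c_def d0_def)
qed

end
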